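(* Let $P$ be a simple $n$-polytope, $\lambda$ a characteristic function on $P$ with $X(P,\lambda)$ orientable, and $G\subset\mathbb{Z}_2^n$ the orientation-preserving subgroup. Then $G_F\not\subset G$ for every (proper) face $F$ of $P$ lying in $\partial P$.
   Context: A characteristic function is a map $\lambda$ from the facets $F_1,\dots,F_m$ of $P$ to $\mathbb{Z}_2^n$, $\lambda_i=\lambda(F_i)$, such that for every codimension-$k$ face $F=F_{i_1}\cap\dots\cap F_{i_k}$ the vectors $\lambda_{i_1},\dots,\lambda_{i_k}$ are linearly independent. $G_F$ denotes the subgroup of $\mathbb{Z}_2^n$ generated by the $\lambda_i$ with $F_i\supseteq F$. The small cover is $X(P,\lambda)=P\times\mathbb{Z}_2^n/\!\sim$ with $(p,a)\sim(q,b)$ iff $p=q$ and $b-a\in G_{F(p)}$ ($F(p)$ the face containing $p$ in its relative interior), with $\mathbb{Z}_2^n$ acting by translation in the second factor. The orientation-preserving subgroup $G$ is the set of elements acting by orientation-preserving homeomorphisms; it equals $\ker\xi$ for a functional $\xi\in(\mathbb{Z}_2^n)^*$ with $\xi(\lambda_i)=1$ for all $i$. *)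

theory Defs
  imports "HOL-Analysis.Analysis" "HOL-Library.Z2"
begin

definition simple_polytope :: "(real ^ 'n) set \<Rightarrow> bool" where
  "simple_polytope P \<longleftrightarrow> polytope P \<and> aff_dim P = int CARD('n) \<and>
     (\<forall>v. {v} face_of P \<longrightarrow> card {F. F facet_of P \<and> v \<in> F} = CARD('n))"

text \<open>A characteristic function assigns to each facet a vector
  such that for every nonempty face F the vectors of the facets containing F are
  linearly independent over Z_2 (no nonempty subfamily sums to 0).\<close>
definition characteristic_function ::
    "(real ^ 'n) set \<Rightarrow> ((real ^ 'n) set \<Rightarrow> bit ^ 'n) \<Rightarrow> bool" where
  "characteristic_function P lam \<longleftrightarrow>
     (\<forall>F. F face_of P \<and> F \<noteq> {} \<longrightarrow>
        (\<forall>S. S \<subseteq> {Fi. Fi facet_of P \<and> F \<subseteq> Fi} \<and> S \<noteq> {} \<longrightarrow> sum lam S \<noteq> 0))"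

text \<open>G_F: subgroup of Z_2^n generated by the lam_i with F_i containing F
  (over Z_2, the set of sums of finite subfamilies).\<close>
definition face_group ::
    "(real ^ 'n) set \<Rightarrow> ((real ^ 'n) set \<Rightarrow> bit ^ 'n) \<Rightarrow> (real ^ 'n) set \<Rightarrow> (bit ^ 'n) set" where
  "face_group P lam F = {sum lam S | S. S \<subseteq> {Fi. Fi facet_of P \<and> F \<subseteq> Fi}}"

text \<open>A functional xi in (Z_2^n)^* (Z_2-linear = additive) with xi(lam_i) = 1 for all facets.\<close>
definition orientation_functional ::
    "(real ^ 'n) set \<Rightarrow> ((real ^ 'n) set \<Rightarrow> bit ^ 'n) \<Rightarrow> (bit ^ 'n \<Rightarrow> bit) \<Rightarrow> bool" where
  "orientation_functional P lam xi \<longleftrightarrow>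
     (\<forall>a b. xi (a + b) = xi a + xi b) \<and> (\<forall>Fi. Fi facet_of P \<longrightarrow> xi (lam Fi) = 1)"

text \<open>X(P,lam) is orientable iff such a functional exists; the orientation-preserving
  subgroup is its kernel.\<close>
definition orientable_small_cover ::
    "(real ^ 'n) set \<Rightarrow> ((real ^ 'n) set \<Rightarrow> bit ^ 'n) \<Rightarrow> bool" where
  "orientable_small_cover P lam \<longleftrightarrow> (\<exists>xi. orientation_functional P lam xi)"

definition orientation_preserving_subgroup ::
    "(real ^ 'n) set \<Rightarrow> ((real ^ 'n) set \<Rightarrow> bit ^ 'n) \<Rightarrow> (bit ^ 'n) set" where
  "orientation_preserving_subgroup P lam =
     {g. (SOME xi. orientation_functional P lam xi) g = 0}"

end

theory Submission
  imports Defs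
begin

lemma facet_label_in_face_group:
  assumes "Fi facet_of P" and "F \<subseteq> Fi"
  shows "lam Fi \<in> face_group P lam F"
  unfolding face_group_def using assms by (intro CollectI exI[of _ "{Fi}"]) auto

lemma orientation_functional_some:
  assumes "orientable_small_cover P lam"
  shows "orientation_functional P lam (SOME xi. orientation_functional P lam xi)"
  using assms unfolding orientable_small_cover_def by (rule someI_ex)

lemma facet_label_not_orientation_preserving:
  assumes "orientable_small_cover P lam" and "Fi facet_of P"
  shows "lam Fi \<notin> orientation_preserving_subgroup P lam"
  using orientation_functional_some[OF assms(1)] assms(2)
  unfolding orientation_functional_def orientation_preserving_subgroup_def by simp

text \<open>Only two facts enter: a proper face lies in some facet, whose label is
  in the face group but evaluates to 1 under the orientation functional.\<close>

theorem lemma2p6: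
  fixes P :: "(real ^ 'n) set" and lam :: "(real ^ 'n) set \<Rightarrow> bit ^ 'n"
  assumes "simple_polytope P"
    and "characteristic_function P lam"
    and "orientable_small_cover P lam"
    and "F face_of P" and "F \<noteq> {}" and "F \<noteq> P"
  shows "\<not> face_group P lam F \<subseteq> orientation_preserving_subgroup P lam"
proof -
  have "polyhedron P"
    using assms(1) polytope_imp_polyhedron unfolding simple_polytope_def by blast
  then obtain Fi where "Fi facet_of P" "F \<subseteq> Fi"
    using face_of_polyhedron_subset_facet assms(4-6) by blast
  then show ?thesis
    using facet_label_in_face_group facet_label_not_orientation_preserving[OF assms(3)]
    by blast
qed

end
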